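(* Let $\mathbf{\Theta}$ be a countable set of intentions and consider the following language-generation model: an intention $\theta\sim q(\theta)$ is drawn, a message $\mathbf{x}\sim q(\mathbf{x}\mid\theta)$ is generated, and a continuation $\mathbf{y}$ is generated with $q(\mathbf{y}\mid\mathbf{x},\theta)$, so that $q(\mathbf{x},\mathbf{y})=\sum_{\theta\in\mathbf{\Theta}}q(\mathbf{x},\theta)\,q(\mathbf{y}\mid\mathbf{x},\theta)$ and $q(\mathbf{x})=\sum_{\theta}q(\mathbf{x},\theta)$. Suppose the language is $\varepsilon$-ambiguous, and let $\mathbf{x}$ be a prompt generated under intention $\theta_{\mathbf{x}}$ with ambiguity $\varepsilon(\mathbf{x})$, i.e. $\Pr(\theta_{\mathbf{x}}\mid\mathbf{x})\ge 1-\varepsilon(\mathbf{x})$. Let $p_{\mathbf{\Lambda}_*}$ be a language model whose distribution over strings equals the true marginal distribution, $p_{\mathbf{\Lambda}_*}(\mathbf{s})=q(\mathbf{s})$ for all strings $\mathbf{s}$, and let $p_{\mathbf{\Lambda}_*}(\mathbf{y}\mid\mathbf{x})=p_{\mathbf{\Lambda}_*}(\mathbf{x},\mathbf{y})/p_{\mathbf{\Lambda}_*}(\mathbf{x})$. Then for every $\mathbf{y}$, $$\big|p_{\mathbf{\Lambda}_*}(\mathbf{y}\mid\mathbf{x})-q(\mathbf{y}\mid\mathbf{x},\theta_{\mathbf{x}})\big|\le\varepsilon(\mathbf{x}).$$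
   Context: A language is $\varepsilon$-ambiguous if every message $\mathbf{x}$ it generates under intention $\theta_0$ satisfies $\Pr(\theta_0\mid\mathbf{x})\ge 1-\varepsilon(\mathbf{x})$ for some $\varepsilon(\mathbf{x})\in[0,1)$, the ambiguity of $\mathbf{x}$. Here $\Pr(\theta\mid\mathbf{x})=q(\theta,\mathbf{x})/q(\mathbf{x})$ with $q(\theta,\mathbf{x})=q(\theta)q(\mathbf{x}\mid\theta)$. *)

theory Defs
  imports "HOL-Analysis.Analysis"
begin

text \<open>Intentions of type 'th (the set Theta),
messages/continuations (strings) of type 's.
  prior th      = q(theta)
  qx th x       = q(x | theta)
  qy x th y     = q(y | x, theta)\<close>

definition qjoint_xth :: "('th \<Rightarrow> real) \<Rightarrow> ('th \<Rightarrow> 's \<Rightarrow> real) \<Rightarrow> 'th \<Rightarrow> 's \<Rightarrow> real" where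
  "qjoint_xth prior qx th x = prior th * qx th x"

definition qmarg :: "'th set \<Rightarrow> ('th \<Rightarrow> real) \<Rightarrow> ('th \<Rightarrow> 's \<Rightarrow> real) \<Rightarrow> 's \<Rightarrow> real" where
  "qmarg Theta prior qx x = (\<Sum>\<^sub>\<infinity>th\<in>Theta. qjoint_xth prior qx th x)"

definition qjoint_xy :: "'th set \<Rightarrow> ('th \<Rightarrow> real) \<Rightarrow> ('th \<Rightarrow> 's \<Rightarrow> real)
    \<Rightarrow> ('s \<Rightarrow> 'th \<Rightarrow> 's \<Rightarrow> real) \<Rightarrow> 's \<Rightarrow> 's \<Rightarrow> real" where
  "qjoint_xy Theta prior qx qy x y = (\<Sum>\<^sub>\<infinity>th\<in>Theta. qjoint_xth prior qx th x * qy x th y)"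

definition posterior :: "'th set \<Rightarrow> ('th \<Rightarrow> real) \<Rightarrow> ('th \<Rightarrow> 's \<Rightarrow> real) \<Rightarrow> 'th \<Rightarrow> 's \<Rightarrow> real" where
  "posterior Theta prior qx th x = qjoint_xth prior qx th x / qmarg Theta prior qx x"

end

theory Submission
  imports Defs
begin

text \<open>The predictive distribution \<open>p(y | x) = \<Sum>\<^sub>\<theta> Pr(\<theta> | x) q(y | x, \<theta>)\<close> is a
  posterior-weighted average of numbers in \<open>[0, 1]\<close>. Its distance from the value
  \<open>q(y | x, \<theta>\<^sub>x)\<close> is therefore at most the posterior mass of the other intentions,
  \<open>1 - Pr(\<theta>\<^sub>x | x) \<le> \<epsilon>(x)\<close>.\<close>

lemma has_sum_nonneg_term_le:
  fixes f :: "'a \<Rightarrow> real"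
  assumes "(f has_sum s) A" "\<And>t. t \<in> A \<Longrightarrow> 0 \<le> f t" "a \<in> A"
  shows "f a \<le> s"
  using finite_sum_le_has_sum[OF assms(1), of "{a}"] assms(2,3) by auto

lemma two_point_mixture_deviation_le:
  fixes a r s q :: real
  assumes "0 < a" "0 \<le> s" "s \<le> r" "0 \<le> q" "q \<le> 1"
  shows "\<bar>(a * q + s) / (a + r) - q\<bar> \<le> r / (a + r)"
proof -
  have pos: "0 < a + r" using assms by linarith
  have "(a * q + s) / (a + r) - q = (s - r * q) / (a + r)"
    using pos by (simp add: field_simps)
  moreover have "0 \<le> r * q" "r * q \<le> r"
    using assms by (simp_all add: mult_left_le)
  then have "\<bar>s - r * q\<bar> \<le> r"
    using assms by linarith
  ultimately show ?thesis
    using pos by (simp add: abs_divide divide_right_mono)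
qed

lemma infsum_weighted_average_deviation_le:
  fixes w g :: "'a \<Rightarrow> real"
  assumes w_summable: "w summable_on A" and w_nonneg: "\<And>t. t \<in> A \<Longrightarrow> 0 \<le> w t"
    and g_range: "\<And>t. t \<in> A \<Longrightarrow> 0 \<le> g t \<and> g t \<le> 1"
    and "a \<in> A" and "0 < w a"
  shows "\<bar>(\<Sum>\<^sub>\<infinity>t\<in>A. w t * g t) / infsum w A - g a\<bar> \<le> 1 - w a / infsum w A"
proof -
  define B where "B = A - {a}"
  have A_eq: "A = insert a B" and "a \<notin> B"
    using \<open>a \<in> A\<close> unfolding B_def by auto
  have wg_le_w: "w t * g t \<le> w t" and wg_nonneg: "0 \<le> w t * g t" if "t \<in> A" for t
    using w_nonneg[OF that] g_range[OF that] by (auto simp: mult_left_le)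
  have wg_summable: "(\<lambda>t. w t * g t) summable_on A"
    by (rule summable_on_comparison_test[OF w_summable wg_le_w wg_nonneg])
  have B_summable: "w summable_on B" "(\<lambda>t. w t * g t) summable_on B"
    using summable_on_subset[OF w_summable] summable_on_subset[OF wg_summable] B_def by auto
  define r where "r = infsum w B"
  define s where "s = (\<Sum>\<^sub>\<infinity>t\<in>B. w t * g t)"
  have total: "infsum w A = w a + r"
    unfolding r_def A_eq using infsum_insert[OF B_summable(1) \<open>a \<notin> B\<close>] .
  have weighted: "(\<Sum>\<^sub>\<infinity>t\<in>A. w t * g t) = w a * g a + s"
    unfolding s_def A_eq using infsum_insert[OF B_summable(2) \<open>a \<notin> B\<close>] .
  have "0 \<le> s"
    unfolding s_def using wg_nonneg A_eq by (auto intro: infsum_nonneg)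
  moreover have "s \<le> r"
    unfolding s_def r_def using wg_le_w A_eq B_summable by (auto intro: infsum_mono)
  ultimately have "\<bar>(w a * g a + s) / (w a + r) - g a\<bar> \<le> r / (w a + r)"
    using two_point_mixture_deviation_le[OF \<open>0 < w a\<close>] g_range[OF \<open>a \<in> A\<close>] by simp
  moreover have "r / (w a + r) = 1 - w a / (w a + r)"
    using \<open>0 < w a\<close> \<open>0 \<le> s\<close> \<open>s \<le> r\<close> by (simp add: field_simps)
  ultimately show ?thesis
    unfolding total weighted by simp
qed

theorem proposition2:
  fixes Theta :: "'th set" and prior :: "'th \<Rightarrow> real"
    and qx :: "'th \<Rightarrow> 's \<Rightarrow> real" and qy :: "'s \<Rightarrow> 'th \<Rightarrow> 's \<Rightarrow> real"
    and p_marg :: "'s \<Rightarrow> real" and p_joint :: "'s \<Rightarrow> 's \<Rightarrow> real"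
    and x :: 's and th_x :: 'th and eps :: real
  assumes countable: "countable Theta"
    and prior_nonneg: "\<And>th. th \<in> Theta \<Longrightarrow> prior th \<ge> 0"
    and prior_sum: "(prior has_sum 1) Theta"
    and qx_nonneg: "\<And>th s. th \<in> Theta \<Longrightarrow> qx th s \<ge> 0"
    and qx_sum: "\<And>th. th \<in> Theta \<Longrightarrow> (qx th has_sum 1) UNIV"
    and qy_nonneg: "\<And>th s t. th \<in> Theta \<Longrightarrow> qy s th t \<ge> 0"
    and qy_sum: "\<And>th s. th \<in> Theta \<Longrightarrow> (qy s th has_sum 1) UNIV"
    and generated: "th_x \<in> Theta" "qjoint_xth prior qx th_x x > 0"
    and eps_range: "0 \<le> eps" "eps < 1"
    and ambiguity: "posterior Theta prior qx th_x x \<ge> 1 - eps"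
    and p_marg_eq: "\<And>s. p_marg s = qmarg Theta prior qx s"
    and p_joint_eq: "\<And>s t. p_joint s t = qjoint_xy Theta prior qx qy s t"
  shows "\<forall>y. \<bar>p_joint x y / p_marg x - qy x th_x y\<bar> \<le> eps"
proof
  fix y
  define w where "w = (\<lambda>th. qjoint_xth prior qx th x)"
  have p_joint_x: "p_joint x y = (\<Sum>\<^sub>\<infinity>th\<in>Theta. w th * qy x th y)"
    by (simp add: p_joint_eq qjoint_xy_def w_def)
  have p_marg_x: "p_marg x = infsum w Theta"
    by (simp add: p_marg_eq qmarg_def w_def)
  have w_nonneg: "0 \<le> w th" and w_le_prior: "w th \<le> prior th" if "th \<in> Theta" for th
    using prior_nonneg[OF that] qx_nonneg[OF that] has_sum_nonneg_term_le[OF qx_sum[OF that]]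
    by (auto simp: w_def qjoint_xth_def mult_left_le)
  have w_summable: "w summable_on Theta"
    using summable_on_comparison_test[OF has_sum_imp_summable[OF prior_sum]] w_le_prior w_nonneg
    by blast
  have qy_range: "0 \<le> qy x th y \<and> qy x th y \<le> 1" if "th \<in> Theta" for th
    using qy_nonneg[OF that] has_sum_nonneg_term_le[OF qy_sum[OF that]] by auto
  have "\<bar>p_joint x y / p_marg x - qy x th_x y\<bar> \<le> 1 - w th_x / p_marg x"
    unfolding p_joint_x p_marg_x
    using infsum_weighted_average_deviation_le[OF w_summable w_nonneg qy_range generated(1)]
      generated(2)
    by (simp add: w_def)
  also have "\<dots> \<le> eps"
    using ambiguity by (simp add: posterior_def p_marg_eq w_def)
  finally show "\<bar>p_joint x y / p_marg x - qy x th_x y\<bar> \<le> eps" .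
qed

end
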